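(* Let $G$ and $H$ be finite simple connected graphs, each of order at least $2$. If the Cartesian product $G \,\square\, H$ is well-dominated, then $\gamma(G \,\square\, H)=\gamma(G)\cdot n(H)=\gamma(H)\cdot n(G)$.
   Context: $n(X)$ is the order of $X$ and $\gamma(X)$ its domination number. A graph is well-dominated if every minimal (with respect to inclusion) dominating set is a minimum dominating set. The Cartesian product $G\,\square\, H$ has vertex set $V(G)\times V(H)$, with $(g_1,h_1)$ adjacent to $(g_2,h_2)$ iff either ($g_1=g_2$ and $h_1h_2\in E(H)$) or ($h_1=h_2$ and $g_1g_2\in E(G)$). *)

theory Defs
  imports Main
begin

definition simple_graph :: "'a set \<Rightarrow> ('a \<times> 'a) set \<Rightarrow> bool" where
  "simple_graph V E \<longleftrightarrow> finite V \<and> E \<subseteq> V \<times> V \<and> sym E \<and> (\<forall>v. (v, v) \<notin> E)"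

definition connected_graph :: "'a set \<Rightarrow> ('a \<times> 'a) set \<Rightarrow> bool" where
  "connected_graph V E \<longleftrightarrow> V \<noteq> {} \<and> (\<forall>u\<in>V. \<forall>v\<in>V. (u, v) \<in> E\<^sup>*)"

definition dominating_set :: "'a set \<Rightarrow> ('a \<times> 'a) set \<Rightarrow> 'a set \<Rightarrow> bool" where
  "dominating_set V E D \<longleftrightarrow> D \<subseteq> V \<and> (\<forall>v\<in>V. v \<in> D \<or> (\<exists>u\<in>D. (u, v) \<in> E))"

definition minimal_dominating_set :: "'a set \<Rightarrow> ('a \<times> 'a) set \<Rightarrow> 'a set \<Rightarrow> bool" where
  "minimal_dominating_set V E D \<longleftrightarrow>
     dominating_set V E D \<and> (\<forall>D'. D' \<subset> D \<longrightarrow> \<not> dominating_set V E D')"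

definition domination_number :: "'a set \<Rightarrow> ('a \<times> 'a) set \<Rightarrow> nat" where
  "domination_number V E = (LEAST k. \<exists>D. dominating_set V E D \<and> card D = k)"

definition minimum_dominating_set :: "'a set \<Rightarrow> ('a \<times> 'a) set \<Rightarrow> 'a set \<Rightarrow> bool" where
  "minimum_dominating_set V E D \<longleftrightarrow>
     dominating_set V E D \<and> card D = domination_number V E"

definition well_dominated :: "'a set \<Rightarrow> ('a \<times> 'a) set \<Rightarrow> bool" where
  "well_dominated V E \<longleftrightarrow>
     (\<forall>D. minimal_dominating_set V E D \<longrightarrow> minimum_dominating_set V E D)"

definition cart_prod_edges ::
  "'a set \<Rightarrow> ('a \<times> 'a) set \<Rightarrow> 'b set \<Rightarrow> ('b \<times> 'b) set \<Rightarrow> (('a \<times> 'b) \<times> ('a \<times> 'b)) set" where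
  "cart_prod_edges VG EG VH EH =
     {((g1, h1), (g2, h2)). g1 \<in> VG \<and> g2 \<in> VG \<and> h1 \<in> VH \<and> h2 \<in> VH \<and>
        ((g1 = g2 \<and> (h1, h2) \<in> EH) \<or> (h1 = h2 \<and> (g1, g2) \<in> EG))}"

end

theory Submission
  imports Defs
begin

text \<open>By the theorem of Bollobas and Cockayne, a graph without isolated vertices has a
  minimum dominating set D in which every vertex v has an external private neighbour u.
  Then D \<times> V(H) is a minimal dominating set of G \<box> H: without (v, h) the vertex (u, h)
  is no longer dominated. Well-dominatedness makes it minimum, so
  \<gamma>(G \<box> H) = \<gamma>(G) n(H), and symmetrically \<gamma>(G \<box> H) = \<gamma>(H) n(G).\<close>

definition external_private_neighbour ::
  "'a set \<Rightarrow> ('a \<times> 'a) set \<Rightarrow> 'a set \<Rightarrow> 'a \<Rightarrow> 'a \<Rightarrow> bool" where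
  "external_private_neighbour V E D v u \<longleftrightarrow>
     u \<in> V - D \<and> (v, u) \<in> E \<and> (\<forall>y\<in>D - {v}. (y, u) \<notin> E)"

lemma domination_number_le_card:
  assumes "dominating_set V E D"
  shows "domination_number V E \<le> card D"
  unfolding domination_number_def using assms by (intro Least_le) blast

lemma minimum_dominating_set_exists:
  assumes "finite V"
  shows "\<exists>D. minimum_dominating_set V E D"
proof -
  have "\<exists>k D. dominating_set V E D \<and> card D = k"
    by (auto simp: dominating_set_def)
  then have "\<exists>D. dominating_set V E D \<and> card D = (LEAST k. \<exists>D. dominating_set V E D \<and> card D = k)"
    by (rule LeastI_ex)
  then show ?thesis
    unfolding minimum_dominating_set_def domination_number_def .
qed

lemma minimum_imp_minimal_dominating_set:
  assumes "finite V" "minimum_dominating_set V E D"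
  shows "minimal_dominating_set V E D"
  unfolding minimal_dominating_set_def
proof (intro conjI allI impI notI)
  show dom: "dominating_set V E D"
    using assms(2) by (simp add: minimum_dominating_set_def)
  fix D' assume "D' \<subset> D" "dominating_set V E D'"
  have "finite D"
    using assms(1) dom finite_subset by (auto simp: dominating_set_def)
  then have "card D' < card D"
    using \<open>D' \<subset> D\<close> psubset_card_mono by blast
  with domination_number_le_card[OF \<open>dominating_set V E D'\<close>] assms(2) show False
    by (simp add: minimum_dominating_set_def)
qed

lemma minimal_dominating_set_without_external_private_neighbour:
  assumes "minimal_dominating_set V E D" "v \<in> D"
    and no_epn: "\<nexists>u. external_private_neighbour V E D v u"
  shows "\<forall>y\<in>D - {v}. (y, v) \<notin> E"
proof -
  have dom: "dominating_set V E D" and not_dom: "\<not> dominating_set V E (D - {v})"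
    using assms(1,2) unfolding minimal_dominating_set_def by auto
  have "D - {v} \<subseteq> V"
    using dom by (auto simp: dominating_set_def)
  with not_dom obtain u where u: "u \<in> V" "u \<notin> D - {v}" "\<forall>y\<in>D - {v}. (y, u) \<notin> E"
    unfolding dominating_set_def by auto
  from dom \<open>u \<in> V\<close> have "u \<in> D \<or> (\<exists>y\<in>D. (y, u) \<in> E)"
    unfolding dominating_set_def by blast
  with u have "u = v \<or> (v, u) \<in> E"
    by blast
  moreover have "\<not> external_private_neighbour V E D v u"
    using no_epn by blast
  ultimately have "u = v"
    using u unfolding external_private_neighbour_def by blast
  with u show ?thesis by simp
qed

lemma connected_graph_neighbour:
  assumes "connected_graph V E" "card V \<ge> 2" "v \<in> V"
  obtains w where "(v, w) \<in> E"
proof -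
  have "\<not> V \<subseteq> {v}"
    using assms(2) card_mono[of "{v}" V] by auto
  then obtain u where "u \<in> V" "u \<noteq> v" by blast
  with assms(1,3) have "(v, u) \<in> E\<^sup>*"
    unfolding connected_graph_def by blast
  then show thesis
    using \<open>u \<noteq> v\<close>
    by (cases rule: converse_rtranclE) (auto intro: that)
qed

text \<open>Without an external private neighbour, every vertex outside D adjacent to v is
  also dominated by D - {v}, so v may be traded for any neighbour w.\<close>
lemma dominating_set_exchange:
  assumes "sym E" "dominating_set V E D" "v \<in> D" "(v, w) \<in> E" "w \<in> V"
    and no_epn: "\<nexists>u. external_private_neighbour V E D v u"
  shows "dominating_set V E (insert w (D - {v}))"
  unfolding dominating_set_def
proof (intro conjI ballI)
  show "insert w (D - {v}) \<subseteq> V"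
    using assms(2,5) by (auto simp: dominating_set_def)
  fix z assume z: "z \<in> V"
  show "z \<in> insert w (D - {v}) \<or> (\<exists>y\<in>insert w (D - {v}). (y, z) \<in> E)"
  proof (cases "z = v \<or> z \<in> D")
    case True
    with assms(1,4) show ?thesis by (auto dest: symD)
  next
    case False
    with assms(2) z obtain y where "y \<in> D" "(y, z) \<in> E"
      by (auto simp: dominating_set_def)
    with False z no_epn show ?thesis
      unfolding external_private_neighbour_def by (cases "y = v") auto
  qed
qed

theorem bollobas_cockayne:
  assumes "simple_graph V E" and no_isolated: "\<forall>v\<in>V. \<exists>w. (v, w) \<in> E"
  shows "\<exists>D. minimum_dominating_set V E D \<and>
           (\<forall>v\<in>D. \<exists>u. external_private_neighbour V E D v u)"
proof -
  have fin: "finite V" and EV: "E \<subseteq> V \<times> V" and sym: "sym E" and irrefl: "\<forall>v. (v, v) \<notin> E"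
    using assms(1) unfolding simple_graph_def by auto
  have "finite E"
    using EV fin finite_subset by blast
  text \<open>Among the minimum dominating sets choose one spanning the most edges.\<close>
  obtain D where min: "minimum_dominating_set V E D"
    and most_edges: "\<And>D'. minimum_dominating_set V E D' \<Longrightarrow>
                              card (E \<inter> D' \<times> D') \<le> card (E \<inter> D \<times> D)"
    using ex_has_greatest_nat[where f = "\<lambda>D. card (E \<inter> D \<times> D)" and b = "Suc (card E)"]
      minimum_dominating_set_exists[OF fin] card_mono[OF \<open>finite E\<close>]
    by (metis Int_lower1 le_imp_less_Suc)
  have dom: "dominating_set V E D"
    using min by (simp add: minimum_dominating_set_def)
  have "finite D" "D \<subseteq> V"
    using dom fin finite_subset by (auto simp: dominating_set_def)
  have "\<exists>u. external_private_neighbour V E D v u" if "v \<in> D" for v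
  proof (rule ccontr)
    assume no_epn: "\<nexists>u. external_private_neighbour V E D v u"
    have "\<forall>y\<in>D - {v}. (y, v) \<notin> E"
      using minimum_imp_minimal_dominating_set[OF fin min] \<open>v \<in> D\<close> no_epn
      by (rule minimal_dominating_set_without_external_private_neighbour)
    with sym irrefl have isolated_in_D: "\<forall>y\<in>D. (y, v) \<notin> E \<and> (v, y) \<notin> E"
      by (auto dest: symD)
    obtain w where "(v, w) \<in> E"
      using no_isolated \<open>v \<in> D\<close> \<open>D \<subseteq> V\<close> by blast
    then have "w \<in> V" "w \<notin> D"
      using EV isolated_in_D by auto
    with no_epn \<open>(v, w) \<in> E\<close> obtain x where x: "x \<in> D - {v}" "(x, w) \<in> E"
      unfolding external_private_neighbour_def by auto
    define D' where "D' = insert w (D - {v})"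
    have "card D' = card D"
      unfolding D'_def using \<open>finite D\<close> \<open>w \<notin> D\<close> \<open>v \<in> D\<close>
      by (metis card_Suc_Diff1 card_insert_disjoint finite_Diff DiffD1)
    with dominating_set_exchange[OF sym dom \<open>v \<in> D\<close> \<open>(v, w) \<in> E\<close> \<open>w \<in> V\<close>] no_epn min
    have "minimum_dominating_set V E D'"
      unfolding D'_def minimum_dominating_set_def by auto
    then have "card (E \<inter> D' \<times> D') \<le> card (E \<inter> D \<times> D)"
      by (rule most_edges)
    moreover have "E \<inter> D \<times> D \<subset> E \<inter> D' \<times> D'"
    proof
      show "E \<inter> D \<times> D \<subseteq> E \<inter> D' \<times> D'"
        using isolated_in_D unfolding D'_def by auto
      have "(w, x) \<in> E \<inter> D' \<times> D'"
        using x sym unfolding D'_def by (auto dest: symD)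
      with \<open>w \<notin> D\<close> show "E \<inter> D \<times> D \<noteq> E \<inter> D' \<times> D'" by blast
    qed
    then have "card (E \<inter> D \<times> D) < card (E \<inter> D' \<times> D')"
      using \<open>finite E\<close> by (intro psubset_card_mono) auto
    ultimately show False by simp
  qed
  with min show ?thesis by blast
qed

lemma minimal_dominating_set_cart_prod_fibres:
  assumes "dominating_set VG EG D"
    and epn: "\<forall>v\<in>D. \<exists>u. external_private_neighbour VG EG D v u"
  shows "minimal_dominating_set (VG \<times> VH) (cart_prod_edges VG EG VH EH) (D \<times> VH)"
  unfolding minimal_dominating_set_def
proof (intro conjI allI impI notI)
  have "D \<subseteq> VG"
    using assms(1) by (auto simp: dominating_set_def)
  with assms(1) show "dominating_set (VG \<times> VH) (cart_prod_edges VG EG VH EH) (D \<times> VH)"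
    unfolding dominating_set_def cart_prod_edges_def by fastforce
  fix D' assume sub: "D' \<subset> D \<times> VH"
    and dom': "dominating_set (VG \<times> VH) (cart_prod_edges VG EG VH EH) D'"
  then obtain v h where "v \<in> D" "h \<in> VH" "(v, h) \<notin> D'" by auto
  with epn obtain u where u: "u \<in> VG - D" "\<forall>y\<in>D - {v}. (y, u) \<notin> EG"
    unfolding external_private_neighbour_def by blast
  with sub \<open>h \<in> VH\<close> dom' obtain p where "p \<in> D'" "(p, (u, h)) \<in> cart_prod_edges VG EG VH EH"
    unfolding dominating_set_def by blast
  with sub u \<open>(v, h) \<notin> D'\<close> show False
    unfolding cart_prod_edges_def by auto
qed

lemma cart_prod_edges_swap:
  "(prod.swap p, prod.swap q) \<in> cart_prod_edges VH EH VG EG \<longleftrightarrow>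
   (p, q) \<in> cart_prod_edges VG EG VH EH"
  unfolding cart_prod_edges_def by (cases p; cases q) auto

lemma dominating_set_cart_prod_swap:
  assumes "dominating_set (VG \<times> VH) (cart_prod_edges VG EG VH EH) D"
  shows "dominating_set (VH \<times> VG) (cart_prod_edges VH EH VG EG) (prod.swap ` D)"
  unfolding dominating_set_def
proof (intro conjI ballI)
  show "prod.swap ` D \<subseteq> VH \<times> VG"
    using assms by (auto simp: dominating_set_def)
  fix p assume "p \<in> VH \<times> VG"
  then have "prod.swap p \<in> VG \<times> VH" by auto
  with assms have "prod.swap p \<in> D \<or> (\<exists>q\<in>D. (q, prod.swap p) \<in> cart_prod_edges VG EG VH EH)"
    unfolding dominating_set_def by (elim conjE bspec)
  then show "p \<in> prod.swap ` D \<or> (\<exists>q\<in>prod.swap ` D. (q, p) \<in> cart_prod_edges VH EH VG EG)"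
  proof
    assume "prod.swap p \<in> D"
    then show ?thesis
      by (metis image_eqI swap_swap)
  next
    assume "\<exists>q\<in>D. (q, prod.swap p) \<in> cart_prod_edges VG EG VH EH"
    then obtain q where "q \<in> D" "(prod.swap q, p) \<in> cart_prod_edges VH EH VG EG"
      using cart_prod_edges_swap[of _ "prod.swap p"] by auto
    then show ?thesis by blast
  qed
qed

lemma minimal_dominating_set_cart_prod_swap:
  assumes "minimal_dominating_set (VH \<times> VG) (cart_prod_edges VH EH VG EG) D"
  shows "minimal_dominating_set (VG \<times> VH) (cart_prod_edges VG EG VH EH) (prod.swap ` D)"
  unfolding minimal_dominating_set_def
proof (intro conjI allI impI notI)
  show "dominating_set (VG \<times> VH) (cart_prod_edges VG EG VH EH) (prod.swap ` D)"
    using assms dominating_set_cart_prod_swap by (auto simp: minimal_dominating_set_def)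
  fix D' assume "D' \<subset> prod.swap ` D"
    and "dominating_set (VG \<times> VH) (cart_prod_edges VG EG VH EH) D'"
  then have "prod.swap ` D' \<subset> D"
    and "dominating_set (VH \<times> VG) (cart_prod_edges VH EH VG EG) (prod.swap ` D')"
    using image_strict_mono[of prod.swap D' "prod.swap ` D"]
    by (auto simp: image_image dominating_set_cart_prod_swap)
  with assms show False
    by (auto simp: minimal_dominating_set_def)
qed

theorem proposition16:
  fixes VG :: "'a set" and EG :: "('a \<times> 'a) set"
    and VH :: "'b set" and EH :: "('b \<times> 'b) set"
  assumes "simple_graph VG EG" and "connected_graph VG EG" and "card VG \<ge> 2"
    and "simple_graph VH EH" and "connected_graph VH EH" and "card VH \<ge> 2"
    and "well_dominated (VG \<times> VH) (cart_prod_edges VG EG VH EH)"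
  shows "domination_number (VG \<times> VH) (cart_prod_edges VG EG VH EH)
           = domination_number VG EG * card VH
       \<and> domination_number VG EG * card VH = domination_number VH EH * card VG"
proof -
  obtain DG where DG: "minimum_dominating_set VG EG DG"
    "\<forall>v\<in>DG. \<exists>u. external_private_neighbour VG EG DG v u"
    using bollobas_cockayne[OF assms(1)] connected_graph_neighbour[OF assms(2,3)] by metis
  obtain DH where DH: "minimum_dominating_set VH EH DH"
    "\<forall>v\<in>DH. \<exists>u. external_private_neighbour VH EH DH v u"
    using bollobas_cockayne[OF assms(4)] connected_graph_neighbour[OF assms(5,6)] by metis
  have "minimal_dominating_set (VG \<times> VH) (cart_prod_edges VG EG VH EH) (DG \<times> VH)"
    using DG
    by (intro minimal_dominating_set_cart_prod_fibres) (auto simp: minimum_dominating_set_def)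
  moreover have "minimal_dominating_set (VG \<times> VH) (cart_prod_edges VG EG VH EH) (VG \<times> DH)"
    using minimal_dominating_set_cart_prod_swap[OF minimal_dominating_set_cart_prod_fibres[of VH EH DH]] DH
    by (auto simp: minimum_dominating_set_def product_swap)
  ultimately have "card (DG \<times> VH) = domination_number (VG \<times> VH) (cart_prod_edges VG EG VH EH)"
    and "card (VG \<times> DH) = domination_number (VG \<times> VH) (cart_prod_edges VG EG VH EH)"
    using assms(7) unfolding well_dominated_def minimum_dominating_set_def by blast+
  with DG(1) DH(1) show ?thesis
    by (simp add: minimum_dominating_set_def card_cartesian_product mult.commute)
qed

end
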